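(* Let $Y$ be a variable. For all positive integers $n$, $$\det_{0\le i,j\le n-1}\left(Y+2^{-2\lceil(i+j)/2\rceil}\binom{2\lceil(i+j)/2\rceil}{\lceil(i+j)/2\rceil}\right)=2^{-n(n-1)}(Yn+1).$$ *)

theory Defs
  imports "HOL-Computational_Algebra.Polynomial" "Jordan_Normal_Form.Determinant"
begin

definition hentry :: "nat \<Rightarrow> nat \<Rightarrow> rat poly" where
  "hentry i j = (let m = nat \<lceil>(of_nat (i + j) :: rat) / 2\<rceil> in
     [:0, 1:] + [: of_nat ((2 * m) choose m) / 2 ^ (2 * m) :])"

end

theory Submission
  imports Defs
begin

text \<open>Let \<open>p\<^sub>i\<close> be the distribution after \<open>i\<close> steps of the walk on \<open>\<nat>\<close> that starts at 0
  and moves by \<open>\<plusminus>1\<close> with probability 1/2 each, a step down from 0 being replaced by staying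
  at 0. Its transition operator is symmetric, hence \<open>\<Sum>\<^sub>k p\<^sub>i(k) p\<^sub>j(k) = p\<^sub>i\<^sub>+\<^sub>j(0)\<close>, and
  \<open>p\<^sub>m(0) = 2\<^sup>-\<^sup>2\<^sup>c binom(2c, c)\<close> with \<open>c = \<lceil>m/2\<rceil>\<close>. So the Hankel matrix is
  \<open>P (I + Y J) P\<^sup>T\<close> where \<open>P = (p\<^sub>i(k))\<close> is row-stochastic and lower triangular with
  diagonal \<open>2\<^sup>-\<^sup>i\<close>, and \<open>J\<close> is the all-ones matrix; finally \<open>det (I + Y J) = 1 + n Y\<close>.\<close>

definition reflecting_step :: "(nat \<Rightarrow> 'a::semiring_0) \<Rightarrow> nat \<Rightarrow> 'a" where
  "reflecting_step f k = (if k = 0 then f 0 + f 1 else f (k - 1) + f (k + 1))"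

lemma sum_reflecting_step_mult_diff:
  fixes f g :: "nat \<Rightarrow> 'a::comm_ring"
  shows "(\<Sum>k<Suc K. reflecting_step f k * g k) - (\<Sum>k<Suc K. f k * reflecting_step g k)
           = f (Suc K) * g K - f K * g (Suc K)"
  by (induction K) (simp_all add: reflecting_step_def algebra_simps)

lemma sum_reflecting_step_swap:
  fixes f g :: "nat \<Rightarrow> 'a::comm_ring"
  assumes "0 < K" and "f (K - 1) = 0" and "f K = 0"
  shows "(\<Sum>k<K. reflecting_step f k * g k) = (\<Sum>k<K. f k * reflecting_step g k)"
  using sum_reflecting_step_mult_diff[of f g "K - 1"] assms by simp

primrec walk_distr :: "nat \<Rightarrow> nat \<Rightarrow> rat" where
  "walk_distr 0 k = (if k = 0 then 1 else 0)"
| "walk_distr (Suc i) k = reflecting_step (walk_distr i) k / 2"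

lemma walk_distr_eq_0: "i < k \<Longrightarrow> walk_distr i k = 0"
  by (induction i arbitrary: k) (auto simp: reflecting_step_def)

lemma binomial_Suc_half:
  assumes "0 < m"
  shows "Suc m choose (Suc m div 2) = (m choose (m div 2)) + (m choose ((m - 1) div 2))"
proof (cases "even m")
  case True
  define s where "s = m div 2 - 1"
  have m: "m = 2 * Suc s" using True assms unfolding s_def by presburger
  then have "Suc m div 2 = Suc s" "m div 2 = Suc s" "(m - 1) div 2 = s" by simp_all
  then show ?thesis using binomial_Suc_Suc[of m s] by simp
next
  case False
  define t where "t = m div 2"
  have m: "m = Suc (2 * t)" using False unfolding t_def by presburger
  then have "Suc m div 2 = Suc t" "m div 2 = t" "(m - 1) div 2 = t" by simp_all
  moreover have "m choose Suc t = m choose t"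
    using binomial_symmetric[of t m] m by (simp add: Suc_diff_le)
  ultimately show ?thesis using binomial_Suc_Suc[of m t] by simp
qed

lemma binomial_Suc_half_diff:
  assumes "k + 2 \<le> m"
  shows "Suc m choose ((m - k) div 2)
           = (m choose ((m - k) div 2)) + (m choose ((m - (k + 2)) div 2))"
proof -
  have "m - k = Suc (Suc (m - (k + 2)))" using assms by arith
  then have "(m - k) div 2 = Suc ((m - (k + 2)) div 2)" by simp
  then show ?thesis using binomial_Suc_Suc[of m "(m - (k + 2)) div 2"] by simp
qed

lemma walk_distr_closed_form:
  "k \<le> i \<Longrightarrow> walk_distr i k = of_nat (i choose ((i - k) div 2)) / 2 ^ i"
proof (induction i arbitrary: k)
  case 0
  then show ?case by simp
next
  case (Suc i)
  show ?case
  proof (cases k)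
    case 0
    show ?thesis
    proof (cases "i = 0")
      case False
      then show ?thesis using 0 Suc.IH[of 0] Suc.IH[of 1]
        by (simp add: reflecting_step_def binomial_Suc_half add_divide_distrib)
    qed (simp add: 0 reflecting_step_def)
  next
    case (Suc k')
    show ?thesis
    proof (cases "k' + 2 \<le> i")
      case True
      then show ?thesis using Suc Suc.IH[of k'] Suc.IH[of "k' + 2"]
        by (simp add: reflecting_step_def binomial_Suc_half_diff add_divide_distrib)
    next
      case False
      then show ?thesis using Suc Suc.IH[of k'] Suc.prems walk_distr_eq_0[of i "k' + 2"]
        by (simp add: reflecting_step_def)
    qed
  qed
qed

lemma walk_distr_diag: "walk_distr i i = 1 / 2 ^ i"
  by (simp add: walk_distr_closed_form)

lemma walk_distr_origin:
  "walk_distr m 0 = of_nat ((2 * ((m + 1) div 2)) choose ((m + 1) div 2)) / 2 ^ (2 * ((m + 1) div 2))"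
proof -
  have central: "walk_distr m 0 = of_nat (m choose (m div 2)) / 2 ^ m"
    by (simp add: walk_distr_closed_form)
  show ?thesis
  proof (cases "even m")
    case True
    then show ?thesis using central by (auto elim!: evenE)
  next
    case False
    define t where "t = m div 2"
    have m: "m = Suc (2 * t)" using False unfolding t_def by presburger
    have "Suc m choose Suc t = 2 * (m choose t)"
      using binomial_Suc_half[of m] m by (simp del: binomial_Suc_Suc)
    moreover have "(m + 1) div 2 = Suc t" "2 * Suc t = Suc m" "m div 2 = t" using m by simp_all
    ultimately show ?thesis using central by simp
  qed
qed

lemma sum_walk_distr_truncate:
  assumes "i < K"
  shows "(\<Sum>k<K. walk_distr i k * g k) = (\<Sum>k\<le>i. walk_distr i k * g k)"
  using assms by (intro sum.mono_neutral_right) (auto simp: walk_distr_eq_0)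

lemma sum_walk_distr:
  "i < K \<Longrightarrow> (\<Sum>k<K. walk_distr i k) = 1"
proof (induction i arbitrary: K)
  case 0
  then show ?case by (simp add: sum.delta')
next
  case (Suc i)
  have "(\<Sum>k<K. walk_distr (Suc i) k) = (\<Sum>k<K. reflecting_step (walk_distr i) k * 1) / 2"
    by (simp add: sum_divide_distrib)
  also have "\<dots> = (\<Sum>k<K. walk_distr i k * reflecting_step (\<lambda>_. 1) k) / 2"
    using Suc.prems by (subst sum_reflecting_step_swap) (auto intro!: walk_distr_eq_0)
  also have "\<dots> = (\<Sum>k<K. walk_distr i k)"
    by (simp add: reflecting_step_def sum_divide_distrib)
  finally show ?case using Suc by simp
qed

lemma sum_walk_distr_mult:
  assumes "i < K"
  shows "(\<Sum>k<K. walk_distr i k * walk_distr j k) = walk_distr (i + j) 0"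
proof -
  have long_range: "(\<Sum>k<L. walk_distr i k * walk_distr j k) = walk_distr (i + j) 0"
    if "i + j < L" for i j L
    using that
  proof (induction i arbitrary: j)
    case 0
    then show ?case by (simp add: if_distrib[of "\<lambda>x. x * _"] sum.delta' cong: if_cong)
  next
    case (Suc i)
    have "(\<Sum>k<L. walk_distr (Suc i) k * walk_distr j k)
        = (\<Sum>k<L. reflecting_step (walk_distr i) k * walk_distr j k) / 2"
      by (simp add: sum_divide_distrib)
    also have "\<dots> = (\<Sum>k<L. walk_distr i k * reflecting_step (walk_distr j) k) / 2"
      using Suc.prems by (subst sum_reflecting_step_swap) (auto intro!: walk_distr_eq_0)
    also have "\<dots> = (\<Sum>k<L. walk_distr i k * walk_distr (Suc j) k)"
      by (simp add: sum_divide_distrib)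
    also have "\<dots> = walk_distr (i + Suc j) 0"
      using Suc.prems by (intro Suc.IH) simp
    finally show ?case by simp
  qed
  have "(\<Sum>k<K. walk_distr i k * walk_distr j k) = (\<Sum>k\<le>i. walk_distr i k * walk_distr j k)"
    by (rule sum_walk_distr_truncate[OF assms])
  also have "\<dots> = (\<Sum>k<Suc (i + j). walk_distr i k * walk_distr j k)"
    by (rule sum_walk_distr_truncate[symmetric]) simp
  also have "\<dots> = walk_distr (i + j) 0"
    by (rule long_range) simp
  finally show ?thesis .
qed

lemma nat_ceiling_half: "nat \<lceil>(of_nat m :: rat) / 2\<rceil> = (m + 1) div 2"
proof (cases "even m")
  case True
  then show ?thesis by (auto elim!: evenE)
next
  case False
  then obtain t where m: "m = 2 * t + 1" by (auto elim!: oddE)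
  have "\<lceil>(of_nat m :: rat) / 2\<rceil> = int t + 1"
    unfolding ceiling_eq_iff using m by (simp add: field_simps)
  then show ?thesis using m by simp
qed

lemma hentry_eq_walk_distr: "hentry i j = [:0, 1:] + [:walk_distr (i + j) 0:]"
  using nat_ceiling_half[of "i + j"] by (simp add: hentry_def Let_def walk_distr_origin)

definition all_ones_mat :: "nat \<Rightarrow> 'a::one mat" where
  "all_ones_mat n = mat n n (\<lambda>_. 1)"

lemma all_ones_mat_carrier [simp]: "all_ones_mat n \<in> carrier_mat n n"
  by (simp add: all_ones_mat_def)

lemma dim_all_ones_mat [simp]:
  "dim_row (all_ones_mat n) = n" "dim_col (all_ones_mat n) = n"
  by (simp_all add: all_ones_mat_def)

lemma index_all_ones_mat [simp]: "i < n \<Longrightarrow> j < n \<Longrightarrow> all_ones_mat n $$ (i, j) = 1"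
  by (simp add: all_ones_mat_def)

lemma transpose_all_ones_mat [simp]: "transpose_mat (all_ones_mat n) = all_ones_mat n"
  by (auto simp: all_ones_mat_def)

lemma row_stochastic_mult_all_ones_mat:
  fixes P :: "'a::comm_semiring_1 mat"
  assumes P: "P \<in> carrier_mat n n" and rows: "\<And>i. i < n \<Longrightarrow> (\<Sum>k<n. P $$ (i, k)) = 1"
  shows "P * all_ones_mat n = all_ones_mat n"
proof (rule eq_matI)
  fix i j assume "i < dim_row (all_ones_mat n :: 'a mat)" "j < dim_col (all_ones_mat n :: 'a mat)"
  then have "i < n" "j < n" by simp_all
  then show "(P * all_ones_mat n) $$ (i, j) = all_ones_mat n $$ (i, j)"
    using carrier_matD[OF P] rows[of i] by (simp add: scalar_prod_def atLeast0LessThan)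
qed (use P in simp_all)

lemma row_stochastic_congruence_all_ones:
  fixes P :: "'a::comm_semiring_1 mat"
  assumes P: "P \<in> carrier_mat n n" and rows: "\<And>i. i < n \<Longrightarrow> (\<Sum>k<n. P $$ (i, k)) = 1"
  shows "P * (1\<^sub>m n + c \<cdot>\<^sub>m all_ones_mat n) * transpose_mat P
           = P * transpose_mat P + c \<cdot>\<^sub>m all_ones_mat n"
proof -
  have PJ: "P * all_ones_mat n = all_ones_mat n"
    using P rows by (rule row_stochastic_mult_all_ones_mat)
  have JPt: "all_ones_mat n * transpose_mat P = all_ones_mat n"
    using transpose_mult[OF P all_ones_mat_carrier, symmetric] PJ by simp
  have "P * (1\<^sub>m n + c \<cdot>\<^sub>m all_ones_mat n) = P * 1\<^sub>m n + P * (c \<cdot>\<^sub>m all_ones_mat n)"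
    by (rule mult_add_distrib_mat[OF P one_carrier_mat smult_carrier_mat[OF all_ones_mat_carrier]])
  also have "\<dots> = P + c \<cdot>\<^sub>m all_ones_mat n"
    using P by (simp add: mult_smult_distrib[OF P all_ones_mat_carrier] PJ)
  finally have "P * (1\<^sub>m n + c \<cdot>\<^sub>m all_ones_mat n) * transpose_mat P
      = P * transpose_mat P + (c \<cdot>\<^sub>m all_ones_mat n) * transpose_mat P"
    using P by (simp add: add_mult_distrib_mat[of _ n n])
  also have "\<dots> = P * transpose_mat P + c \<cdot>\<^sub>m all_ones_mat n"
    using P by (simp add: mult_smult_assoc_mat[OF all_ones_mat_carrier] JPt)
  finally show ?thesis .
qed

lemma one_plus_smult_all_ones_conjugation:
  fixes n :: nat and c :: "'a::comm_ring_1"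
  defines "L \<equiv> mat n n (\<lambda>(i, j). if j = 0 \<or> i = j then 1 else 0)"
    and "U \<equiv> mat n n (\<lambda>(i, j).
      if i = 0 then (if j = 0 then 1 + of_nat n * c else c) else if i = j then 1 else 0)"
  shows "(1\<^sub>m n + c \<cdot>\<^sub>m all_ones_mat n) * L = L * U"
proof -
  define V where "V = mat n n (\<lambda>(i, j).
    if j = 0 then 1 + of_nat n * c else (if i = j then 1 else 0) + c)"
  have "(1\<^sub>m n + c \<cdot>\<^sub>m all_ones_mat n) * L = V"
  proof (rule eq_matI)
    fix i k assume "i < dim_row V" "k < dim_col V"
    then have ik: "i < n" "k < n" by (simp_all add: V_def)
    have "((1\<^sub>m n + c \<cdot>\<^sub>m all_ones_mat n) * L) $$ (i, k)
        = (\<Sum>l\<in>{0..<n}. ((if l = i then 1 else 0) + c) * L $$ (l, k))"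
      using ik by (simp add: L_def scalar_prod_def)
    also have "\<dots> = V $$ (i, k)"
    proof (cases "k = 0")
      case True
      then show ?thesis using ik by (simp add: L_def V_def sum.distrib)
    next
      case False
      then have "(\<Sum>l\<in>{0..<n}. ((if l = i then 1 else 0) + c) * L $$ (l, k))
          = (\<Sum>l\<in>{0..<n}. if l = k then (if k = i then 1 else 0) + c else 0)"
        using ik by (intro sum.cong) (auto simp: L_def)
      then show ?thesis using ik False by (simp add: V_def)
    qed
    finally show "((1\<^sub>m n + c \<cdot>\<^sub>m all_ones_mat n) * L) $$ (i, k) = V $$ (i, k)" .
  qed (simp_all add: L_def V_def)
  moreover have "L * U = V"
  proof (rule eq_matI)
    fix i k assume "i < dim_row V" "k < dim_col V"
    then have ik: "i < n" "k < n" by (simp_all add: V_def)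
    have "(L * U) $$ (i, k) = (\<Sum>l\<in>{0..<n}. (if l = 0 \<or> i = l then 1 else 0) * U $$ (l, k))"
      using ik by (simp add: L_def U_def scalar_prod_def)
    also have "\<dots> = (\<Sum>l\<in>{0..<n}. (if l = 0 then U $$ (l, k) else 0)
        + (if i = 0 then 0 else if l = i then U $$ (l, k) else 0))"
      by (intro sum.cong) auto
    also have "\<dots> = U $$ (0, k) + (if i = 0 then 0 else U $$ (i, k))"
      using ik by (cases "i = 0") (simp_all add: sum.distrib)
    also have "\<dots> = V $$ (i, k)"
      using ik by (auto simp: U_def V_def)
    finally show "(L * U) $$ (i, k) = V $$ (i, k)" .
  qed (simp_all add: L_def U_def V_def)
  ultimately show ?thesis by simp
qed

lemma det_one_plus_smult_all_ones:
  fixes c :: "'a::comm_ring_1"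
  shows "det (1\<^sub>m n + c \<cdot>\<^sub>m all_ones_mat n) = 1 + of_nat n * c"
proof (cases "n = 0")
  case True
  then show ?thesis by (simp add: det_def)
next
  case False
  define L :: "'a mat" where "L = mat n n (\<lambda>(i, j). if j = 0 \<or> i = j then 1 else 0)"
  define U where "U = mat n n (\<lambda>(i, j).
    if i = 0 then (if j = 0 then 1 + of_nat n * c else c) else if i = j then 1 else 0)"
  have carrier: "1\<^sub>m n + c \<cdot>\<^sub>m all_ones_mat n \<in> carrier_mat n n"
    "L \<in> carrier_mat n n" "U \<in> carrier_mat n n"
    by (simp_all add: L_def U_def)
  have "det L = 1"
    by (subst det_lower_triangular[of n]) (auto simp: L_def prod_list_diag_prod)
  moreover have "det U = 1 + of_nat n * c"
  proof -
    have "det U = (\<Prod>i = 0..<n. U $$ (i, i))"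
      by (subst det_upper_triangular[of _ n]) (auto simp: U_def prod_list_diag_prod)
    also have "\<dots> = U $$ (0, 0) * (\<Prod>i = 1..<n. U $$ (i, i))"
      using False by (simp add: prod.atLeast_Suc_lessThan)
    also have "(\<Prod>i = 1..<n. U $$ (i, i)) = 1"
      by (rule prod.neutral) (auto simp: U_def)
    finally show ?thesis using False by (simp add: U_def)
  qed
  ultimately show ?thesis
    using det_mult[OF carrier(1,2)] det_mult[OF carrier(2,3)]
      one_plus_smult_all_ones_conjugation[of n c] by (simp add: L_def U_def)
qed

definition walk_mat :: "nat \<Rightarrow> rat poly mat" where
  "walk_mat n = mat n n (\<lambda>(i, k). [:walk_distr i k:])"

lemma walk_mat_carrier [simp]: "walk_mat n \<in> carrier_mat n n"
  by (simp add: walk_mat_def)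

lemma det_walk_mat: "det (walk_mat n) = [:\<Prod>i<n. (1 / 2) ^ i:]"
  by (subst det_lower_triangular[of n])
    (auto simp: walk_mat_def prod_list_diag_prod walk_distr_eq_0 walk_distr_diag prod_to_poly
      atLeast0LessThan power_one_over)

lemma hankel_eq_walk_mat_congruence:
  "mat n n (\<lambda>(i, j). hentry i j)
     = walk_mat n * (1\<^sub>m n + [:0, 1:] \<cdot>\<^sub>m all_ones_mat n) * transpose_mat (walk_mat n)"
proof -
  have rows: "(\<Sum>k<n. walk_mat n $$ (i, k)) = 1" if "i < n" for i
    using that sum_walk_distr[OF that] by (simp add: walk_mat_def sum_to_poly one_pCons)
  have "walk_mat n * transpose_mat (walk_mat n) = mat n n (\<lambda>(i, j). [:walk_distr (i + j) 0:])"
  proof (rule eq_matI)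
    fix i j assume "i < dim_row (mat n n (\<lambda>(i, j). [:walk_distr (i + j) 0:]))"
      "j < dim_col (mat n n (\<lambda>(i, j). [:walk_distr (i + j) 0:]))"
    then have ij: "i < n" "j < n" by simp_all
    then show "(walk_mat n * transpose_mat (walk_mat n)) $$ (i, j)
        = mat n n (\<lambda>(i, j). [:walk_distr (i + j) 0:]) $$ (i, j)"
      using sum_walk_distr_mult[OF ij(1), of j]
      by (simp add: walk_mat_def scalar_prod_def sum_to_poly atLeast0LessThan mult.commute)
  qed (simp_all add: walk_mat_def)
  then show ?thesis
    by (subst row_stochastic_congruence_all_ones[OF walk_mat_carrier rows])
      (auto simp: hentry_eq_walk_distr)
qed

lemma prod_lessThan_powers_squared:
  fixes x :: "'a::comm_monoid_mult"
  shows "(\<Prod>i<n. x ^ i) ^ 2 = x ^ (n * (n - 1))"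
proof (induction n)
  case (Suc n)
  have "(\<Prod>i<Suc n. x ^ i) ^ 2 = (\<Prod>i<n. x ^ i) ^ 2 * x ^ (n * 2)"
    by (simp add: power_mult_distrib power_mult)
  also have "\<dots> = x ^ (n * (n - 1) + n * 2)"
    by (simp add: Suc.IH power_add)
  also have "n * (n - 1) + n * 2 = Suc n * (Suc n - 1)"
    by (cases n) simp_all
  finally show ?case .
qed simp

theorem mainTheorem9:
  fixes n :: nat
  assumes "n \<ge> 1"
  shows "det (mat n n (\<lambda>(i, j). hentry i j))
           = [: 1 / 2 ^ (n * (n - 1)) :] * ([:0, 1:] * of_nat n + 1)"
proof -
  let ?P = "walk_mat n" and ?A = "1\<^sub>m n + [:0, 1:] \<cdot>\<^sub>m all_ones_mat n :: rat poly mat"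
  have A: "?A \<in> carrier_mat n n" by simp
  have "det (mat n n (\<lambda>(i, j). hentry i j)) = det ?P * det ?A * det ?P"
    unfolding hankel_eq_walk_mat_congruence
    using det_mult[OF mult_carrier_mat[OF walk_mat_carrier A],
        OF transpose_carrier_mat[THEN iffD2, OF walk_mat_carrier]]
      det_mult[OF walk_mat_carrier A] det_transpose[OF walk_mat_carrier]
    by simp
  also have "\<dots> = [:(\<Prod>i<n. (1 / 2) ^ i) ^ 2:] * (1 + of_nat n * [:0, 1:])"
    by (simp add: det_walk_mat det_one_plus_smult_all_ones power2_eq_square algebra_simps)
  finally show ?thesis
    using prod_lessThan_powers_squared[of "1 / 2 :: rat" n] by (simp add: power_one_over algebra_simps)
qed

end
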